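(* Let $\tau\in\mathcal{H}$ with $\Im(\tau)\ge\sqrt3/4$, let $z\in\mathbb{C}$ with $0\le\Im(z)\le\Im(\tau)/4$, and let $\lambda,\mu\in\mathbb{C}\setminus\{0\}$. Then $F^\infty$ is defined at the given point and $$F^{\infty}\left(\lambda\theta_{00}^2(z,\tau),\ \lambda\theta_{01}^2(z,\tau),\ \mu\theta_{00}^2(0,\tau),\ \mu\theta_{01}^2(0,\tau)\right)=(\lambda,\mu).$$ In particular $$F^{\infty}\left(1,\frac{\theta_{01}^2(z,\tau)}{\theta_{00}^2(z,\tau)},1,\frac{\theta_{01}^2(0,\tau)}{\theta_{00}^2(0,\tau)}\right)=\left(\frac{1}{\theta_{00}^2(z,\tau)},\frac{1}{\theta_{00}^2(0,\tau)}\right).$$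
   Context: For $z\in\mathbb{C}$ and $\tau$ in the upper half-plane $\mathcal{H}=\{\tau\in\mathbb{C}:\Im\tau>0\}$, $\theta(z,\tau)=\sum_{n\in\mathbb{Z}}\exp(\pi i\tau n^2+2\pi i n z)$; $\theta_{00}(z,\tau)=\theta(z,\tau)$, $\theta_{01}(z,\tau)=\theta(z+\tfrac12,\tau)$. Optimal F sequence: given $(x_0,y_0,z_0,t_0)\in\mathbb{C}^4$, define recursively $$(x_{n+1},y_{n+1},z_{n+1},t_{n+1})=\Big(\tfrac{\sqrt{x_n}\sqrt{z_n}+\sqrt{y_n}\sqrt{t_n}}{2},\ \tfrac{\sqrt{x_n}\sqrt{t_n}+\sqrt{y_n}\sqrt{z_n}}{2},\ \tfrac{z_n+t_n}{2},\ \sqrt{z_n}\sqrt{t_n}\Big),$$ with square roots chosen "good": $\Re\sqrt{x_n}\ge0$, $\Re\sqrt{z_n}\ge0$; either $|\sqrt{x_n}-\sqrt{y_n}|<|\sqrt{x_n}+\sqrt{y_n}|$ or equality and $\Im(\sqrt{y_n}/\sqrt{x_n})>0$; either $|\sqrt{z_n}-\sqrt{t_n}|<|\sqrt{z_n}+\sqrt{t_n}|$ or equality and $\Im(\sqrt{t_n}/\sqrt{z_n})>0$. When $z_\infty=\lim_n z_n$ exists and is nonzero and $\lim_n(x_n/z_\infty)^{2^n}$ exists, set $F^\infty(x_0,y_0,z_0,t_0)=\big(z_\infty\lim_n(x_n/z_\infty)^{2^n},\ z_\infty\big)$. *)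

theory Defs
  imports "HOL-Analysis.Analysis"
begin

definition jtheta :: "complex \<Rightarrow> complex \<Rightarrow> complex" where
  "jtheta z \<tau> = infsum (\<lambda>n::int. exp (pi * \<i> * \<tau> * (of_int n)^2 + 2 * pi * \<i> * of_int n * z)) UNIV"

definition theta00 :: "complex \<Rightarrow> complex \<Rightarrow> complex" where
  "theta00 z \<tau> = jtheta z \<tau>"

definition theta01 :: "complex \<Rightarrow> complex \<Rightarrow> complex" where
  "theta01 z \<tau> = jtheta (z + 1/2) \<tau>"

definition good_roots :: "complex \<Rightarrow> complex \<Rightarrow> complex \<Rightarrow> complex \<Rightarrow> bool" where
  "good_roots X Y a b \<longleftrightarrow> a^2 = X \<and> b^2 = Y \<and> Re a \<ge> 0 \<and>
     (cmod (a - b) < cmod (a + b) \<or> (cmod (a - b) = cmod (a + b) \<and> Im (b / a) > 0))"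

definition optimal_F_seq ::
  "complex \<Rightarrow> complex \<Rightarrow> complex \<Rightarrow> complex \<Rightarrow>
   (nat \<Rightarrow> complex) \<Rightarrow> (nat \<Rightarrow> complex) \<Rightarrow> (nat \<Rightarrow> complex) \<Rightarrow> (nat \<Rightarrow> complex) \<Rightarrow> bool" where
  "optimal_F_seq x0 y0 z0 t0 x y z t \<longleftrightarrow>
     x 0 = x0 \<and> y 0 = y0 \<and> z 0 = z0 \<and> t 0 = t0 \<and>
     (\<forall>n. \<exists>a b c d. good_roots (x n) (y n) a b \<and> good_roots (z n) (t n) c d \<and>
        x (Suc n) = (a * c + b * d) / 2 \<and>
        y (Suc n) = (a * d + b * c) / 2 \<and>
        z (Suc n) = (z n + t n) / 2 \<and>
        t (Suc n) = c * d)"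

definition F_inf_eq ::
  "complex \<Rightarrow> complex \<Rightarrow> complex \<Rightarrow> complex \<Rightarrow> complex \<times> complex \<Rightarrow> bool" where
  "F_inf_eq x0 y0 z0 t0 v \<longleftrightarrow>
     (\<exists>x y z t. optimal_F_seq x0 y0 z0 t0 x y z t) \<and>
     (\<forall>x y z t. optimal_F_seq x0 y0 z0 t0 x y z t \<longrightarrow>
        (\<exists>zinf L. z \<longlonglongrightarrow> zinf \<and> zinf \<noteq> 0 \<and>
           (\<lambda>n. (x n / zinf) ^ (2 ^ n)) \<longlonglongrightarrow> L \<and> v = (zinf * L, zinf)))"

end

theory Submission
  imports Defs
begin

text \<open>Write \<open>A n\<close>, \<open>B n\<close>, \<open>C n\<close>, \<open>D n\<close> for \<open>\<theta>\<^sub>0\<^sub>0(z, 2^n \<tau>)\<close>,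
  \<open>\<theta>\<^sub>0\<^sub>1(z, 2^n \<tau>)\<close>, \<open>\<theta>\<^sub>0\<^sub>0(0, 2^n \<tau>)\<close>, \<open>\<theta>\<^sub>0\<^sub>1(0, 2^n \<tau>)\<close>. The duplication formulas
  \<open>2 A(n+1)^2 = A n C n + B n D n\<close>, \<open>2 B(n+1)^2 = A n D n + B n C n\<close>,
  \<open>2 C(n+1)^2 = C n^2 + D n^2\<close>, \<open>D(n+1)^2 = C n D n\<close> show that
  \<open>(l n A n^2, l n B n^2, \<mu> C n^2, \<mu> D n^2)\<close> is an F sequence whenever \<open>l 0 = \<lambda>\<close> and
  \<open>l (n+1)\<close> is a square root of \<open>l n \<mu>\<close>. Estimating the theta series termwise, the hypotheses
  on \<open>\<tau>\<close> and \<open>z\<close> give \<open>|A n - B n| < |A n + B n|\<close> and \<open>|C n - D n| < |C n + D n|\<close>;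
  this forces the good square roots to be \<open>\<plusminus>\<surd>(l n) A n, \<plusminus>\<surd>(l n) B n\<close> and
  \<open>\<plusminus>\<surd>\<mu> C n, \<plusminus>\<surd>\<mu> D n\<close>, so every optimal F sequence has this shape. Finally
  \<open>|A n - 1|\<close> and \<open>|C n - 1|\<close> are at most \<open>2 q^(2^n)\<close> with \<open>q = exp (-\<pi> Im \<tau> / 2) < 1\<close>,
  whence \<open>z n \<longrightarrow> \<mu>\<close> and \<open>(x n / \<mu>)^(2^n) = (\<lambda> / \<mu>) A n^(2^(n+1)) \<longrightarrow> \<lambda> / \<mu>\<close>.\<close>

section \<open>The theta series\<close>

definition theta_term :: "complex \<Rightarrow> complex \<Rightarrow> int \<Rightarrow> complex" where
  "theta_term z \<tau> n = exp (pi * \<i> * \<tau> * (of_int n)^2 + 2 * pi * \<i> * of_int n * z)"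

lemma jtheta_eq_infsum: "jtheta z \<tau> = (\<Sum>\<^sub>\<infinity>n. theta_term z \<tau> n)"
  by (simp add: jtheta_def theta_term_def)

lemma theta_term_0 [simp]: "theta_term z \<tau> 0 = 1"
  by (simp add: theta_term_def)

lemma norm_theta_term:
  "norm (theta_term z \<tau> n) = exp (- pi * Im \<tau> * (of_int n)^2 - 2 * pi * of_int n * Im z)"
  unfolding theta_term_def norm_exp_eq_Re by (simp add: power2_eq_square)

lemma exp_pi_i_int: "exp (pi * \<i> * of_int n) = (if even n then 1 else -1)"
proof -
  have "exp (pi * \<i> * of_int n) = exp (of_int n * (of_real pi * \<i>))"
    by (simp add: mult_ac)
  also have "\<dots> = exp (of_real pi * \<i>) powi n"
    by (rule exp_power_int[symmetric])
  finally show ?thesis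
    by (simp add: power_int_minus_left)
qed

lemma theta_term_shift_half:
  "theta_term (z + 1/2) \<tau> n = (if even n then 1 else -1) * theta_term z \<tau> n"
proof -
  have "theta_term (z + 1/2) \<tau> n = theta_term z \<tau> n * exp (pi * \<i> * of_int n)"
    unfolding theta_term_def exp_add[symmetric] by (simp add: algebra_simps)
  then show ?thesis
    by (simp add: exp_pi_i_int)
qed

lemma jtheta_shift_one: "jtheta (z + 1) \<tau> = jtheta z \<tau>"
proof -
  have "theta_term (z + 1) \<tau> n = theta_term z \<tau> n * exp (\<i> * (of_int n * (of_real pi * 2)))" for n
    unfolding theta_term_def exp_add[symmetric] by (simp add: algebra_simps)
  then show ?thesis
    by (simp add: jtheta_eq_infsum)
qed

lemma theta_term_duplication:
  "theta_term (z + w) (2 * \<tau>) j * theta_term (z - w) (2 * \<tau>) k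
     = theta_term z \<tau> (j + k) * theta_term w \<tau> (j - k)"
  unfolding theta_term_def exp_add[symmetric]
  by (rule arg_cong[where f = exp]) (simp add: power2_eq_square algebra_simps)

text \<open>With \<open>u = exp (- pi * Im \<tau> / 2)\<close> the \<open>n\<close>-th term has modulus
  \<open>u ^ (2 n\<^sup>2 + 4 n Im z / Im \<tau>)\<close>; for \<open>0 \<le> Im z \<le> Im \<tau> / 4\<close> the exponent is at least
  \<open>4 n - 2\<close> for \<open>n > 0\<close> and at least \<open>5 \<bar>n\<bar> - 4\<close> for \<open>n < 0\<close>.\<close>
definition theta_majorant :: "real \<Rightarrow> int \<Rightarrow> real" where
  "theta_majorant u n = (if n > 0 then u^2 * (u^4) ^ nat (n - 1) else u * (u^5) ^ nat (- n - 1))"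

lemma norm_theta_term_le_majorant:
  assumes "Im \<tau> > 0" "0 \<le> Im z" "Im z \<le> Im \<tau> / 4" "n \<noteq> 0"
  shows "norm (theta_term z \<tau> n) \<le> theta_majorant (exp (- pi * Im \<tau> / 2)) n"
proof (cases "n > 0")
  case True
  define k where "k = nat (n - 1)"
  have n: "n = int k + 1"
    using True k_def by simp
  have "theta_majorant (exp (- pi * Im \<tau> / 2)) n = exp (of_nat (2 + 4 * k) * (- pi * Im \<tau> / 2))"
    unfolding theta_majorant_def using True k_def
    by (simp add: exp_of_nat_mult[symmetric] power_add power_mult[symmetric] exp_add[symmetric] algebra_simps)
  also have "\<dots> \<ge> exp (- pi * Im \<tau> * (of_int n)^2 - 2 * pi * of_int n * Im z)"
  proof (subst exp_le_cancel_iff)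
    have "pi * Im \<tau> * (real k)^2 \<ge> 0" "2 * pi * (real k + 1) * Im z \<ge> 0"
      using assms by simp_all
    then show "- pi * Im \<tau> * (of_int n)^2 - 2 * pi * of_int n * Im z
        \<le> of_nat (2 + 4 * k) * (- pi * Im \<tau> / 2)"
      unfolding n by (simp add: power2_eq_square algebra_simps)
  qed
  finally show ?thesis
    by (simp add: norm_theta_term)
next
  case False
  define k where "k = nat (- n - 1)"
  have n: "n = - int k - 1"
    using False assms(4) k_def by simp
  have "theta_majorant (exp (- pi * Im \<tau> / 2)) n = exp (of_nat (1 + 5 * k) * (- pi * Im \<tau> / 2))"
    unfolding theta_majorant_def using False k_def
    by (simp add: exp_of_nat_mult[symmetric] power_add power_mult[symmetric] exp_add[symmetric] algebra_simps)
  also have "\<dots> \<ge> exp (- pi * Im \<tau> * (of_int n)^2 - 2 * pi * of_int n * Im z)"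
  proof (subst exp_le_cancel_iff)
    have "real k \<le> (real k)^2"
      by (cases k) (auto simp: power2_eq_square)
    then have a: "pi * Im \<tau> * real k \<le> pi * Im \<tau> * (real k)^2"
      using assms by (intro mult_left_mono) auto
    have b: "2 * pi * (real k + 1) * Im z \<le> 2 * pi * (real k + 1) * (Im \<tau> / 4)"
      using assms by (intro mult_left_mono) auto
    have lhs: "- pi * Im \<tau> * (of_int n)^2 - 2 * pi * of_int n * Im z
        = - (pi * Im \<tau> * (real k)^2) - 2 * (pi * Im \<tau> * real k) - pi * Im \<tau> + 2 * pi * (real k + 1) * Im z"
      by (simp add: n power2_eq_square algebra_simps)
    have rhs: "of_nat (1 + 5 * k) * (- pi * Im \<tau> / 2) = - (pi * Im \<tau>) / 2 - 5 * (pi * Im \<tau> * real k) / 2"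
      by (simp add: algebra_simps)
    have "2 * pi * (real k + 1) * (Im \<tau> / 4) = (pi * Im \<tau> * real k) / 2 + (pi * Im \<tau>) / 2"
      by (simp add: algebra_simps)
    then show "- pi * Im \<tau> * (of_int n)^2 - 2 * pi * of_int n * Im z
        \<le> of_nat (1 + 5 * k) * (- pi * Im \<tau> / 2)"
      unfolding lhs rhs using a b by linarith
  qed
  finally show ?thesis
    by (simp add: norm_theta_term)
qed

lemma has_sum_geometric_nonneg:
  fixes c x :: real
  assumes "0 \<le> c" "0 \<le> x" "x < 1"
  shows "((\<lambda>k::nat. c * x^k) has_sum (c / (1 - x))) UNIV"
proof -
  have "(\<lambda>k. c * x^k) sums (c * (1 / (1 - x)))"
    using assms by (intro sums_mult geometric_sums) auto
  then show ?thesis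
    using assms by (intro sums_nonneg_imp_has_sum) auto
qed

lemma has_sum_theta_majorant:
  assumes "0 \<le> u" "u < 1"
  shows "(theta_majorant u has_sum (u^2 / (1 - u^4) + u / (1 - u^5))) (- {0})"
proof -
  have "u^4 < 1" "u^5 < 1"
    using assms by (auto simp: power_less_one_iff)
  then have "((\<lambda>k::nat. u^2 * (u^4)^k) has_sum (u^2 / (1 - u^4))) UNIV"
    and "((\<lambda>k::nat. u * (u^5)^k) has_sum (u / (1 - u^5))) UNIV"
    using assms by (auto intro: has_sum_geometric_nonneg)
  moreover have "((\<lambda>k::nat. u^2 * (u^4)^k) has_sum (u^2 / (1 - u^4))) UNIV
      \<longleftrightarrow> (theta_majorant u has_sum (u^2 / (1 - u^4))) {n. n > 0}"
    by (rule has_sum_reindex_bij_witness[where j = "\<lambda>k. int k + 1" and i = "\<lambda>n. nat (n - 1)"])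
       (auto simp: theta_majorant_def)
  moreover have "((\<lambda>k::nat. u * (u^5)^k) has_sum (u / (1 - u^5))) UNIV
      \<longleftrightarrow> (theta_majorant u has_sum (u / (1 - u^5))) {n. n < 0}"
    by (rule has_sum_reindex_bij_witness[where j = "\<lambda>k. - int k - 1" and i = "\<lambda>n. nat (- n - 1)"])
       (auto simp: theta_majorant_def)
  ultimately have "(theta_majorant u has_sum (u^2 / (1 - u^4) + u / (1 - u^5))) ({n. n > 0} \<union> {n. n < 0})"
    by (intro has_sum_Un_disjoint) auto
  moreover have "{n::int. n > 0} \<union> {n. n < 0} = - {0}"
    by auto
  ultimately show ?thesis
    by simp
qed

lemma exp_neg_pi_Im_half_le:
  assumes "Im \<tau> \<ge> sqrt 3 / 4"
  shows "exp (- pi * Im \<tau> / 2) \<le> 0.56"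
proof -
  have "1.73 \<le> sqrt 3"
    by (rule real_le_rsqrt) (simp add: power2_eq_square)
  then have x: "0.64 \<le> pi * sqrt 3 / 8"
    using pi_gt3 mult_mono[of 3 pi "1.73" "sqrt 3"] by simp
  have "(1 + 0.64/3)^3 \<le> (1 + (pi * sqrt 3 / 8) / 3)^3"
    using x by (intro power_mono) auto
  also have "\<dots> \<le> exp ((pi * sqrt 3 / 8) / 3)^3"
    by (intro power_mono exp_ge_add_one_self) (use x in auto)
  also have "\<dots> = exp (pi * sqrt 3 / 8)"
    by (simp add: exp_of_nat_mult[symmetric])
  finally have e: "1 / 0.56 \<le> exp (pi * sqrt 3 / 8)"
    by (simp add: power_divide)
  have "exp (- pi * Im \<tau> / 2) \<le> exp (- (pi * sqrt 3 / 8))"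
    using assms by (simp add: mult_left_mono)
  also have "\<dots> = 1 / exp (pi * sqrt 3 / 8)"
    by (simp add: exp_minus field_simps)
  also have "\<dots> \<le> 0.56"
    using e by (simp add: divide_le_eq)
  finally show ?thesis .
qed

lemma theta_majorant_sum_bounds:
  fixes u :: real
  assumes "0 \<le> u" "u \<le> 0.56"
  shows "u^2 / (1 - u^4) + u / (1 - u^5) < 1"
    and "u^2 / (1 - u^4) + u / (1 - u^5) \<le> 2 * u"
proof -
  have "u^4 \<le> 0.56^4" "u^5 \<le> 0.56^5"
    using assms by (intro power_mono; simp)+
  then have "0.9 \<le> 1 - u^4" "0.94 \<le> 1 - u^5"
    by (simp_all add: power_divide)
  then have "u^2 / (1 - u^4) \<le> u^2 / 0.9" "u / (1 - u^5) \<le> u / 0.94"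
    using assms by (intro divide_left_mono; simp)+
  moreover have "u^2 \<le> 0.56 * u"
    using mult_right_mono[OF assms(2) assms(1)] by (simp add: power2_eq_square)
  ultimately show "u^2 / (1 - u^4) + u / (1 - u^5) < 1"
    and "u^2 / (1 - u^4) + u / (1 - u^5) \<le> 2 * u"
    using assms by simp_all
qed

lemma norm_theta_term_summable:
  assumes "Im \<tau> > 0" "0 \<le> Im z" "Im z \<le> Im \<tau> / 4"
  defines "u \<equiv> exp (- pi * Im \<tau> / 2)"
  shows "(\<lambda>n. norm (theta_term z \<tau> n)) summable_on - {0}"
    and "(\<Sum>\<^sub>\<infinity>n\<in>- {0}. norm (theta_term z \<tau> n)) \<le> u^2 / (1 - u^4) + u / (1 - u^5)"
proof -
  have hs: "(theta_majorant u has_sum (u^2 / (1 - u^4) + u / (1 - u^5))) (- {0})"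
    using assms(1) by (intro has_sum_theta_majorant) (auto simp: u_def)
  have le: "norm (theta_term z \<tau> n) \<le> theta_majorant u n" if "n \<in> - {0}" for n
    using norm_theta_term_le_majorant[OF assms(1-3)] that by (auto simp: u_def)
  show s: "(\<lambda>n. norm (theta_term z \<tau> n)) summable_on - {0}"
    using has_sum_imp_summable[OF hs] le by (rule summable_on_comparison_test) auto
  have "(\<Sum>\<^sub>\<infinity>n\<in>- {0}. norm (theta_term z \<tau> n)) \<le> infsum (theta_majorant u) (- {0})"
    using s has_sum_imp_summable[OF hs] le by (rule infsum_mono)
  also have "\<dots> = u^2 / (1 - u^4) + u / (1 - u^5)"
    using hs by (simp add: has_sum_iff)
  finally show "(\<Sum>\<^sub>\<infinity>n\<in>- {0}. norm (theta_term z \<tau> n)) \<le> u^2 / (1 - u^4) + u / (1 - u^5)" .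
qed

lemma theta_term_summable:
  assumes "Im \<tau> > 0" "0 \<le> Im z" "Im z \<le> Im \<tau> / 4"
  shows "theta_term z \<tau> summable_on UNIV"
proof -
  have "theta_term z \<tau> summable_on - {0}"
    using norm_theta_term_summable(1)[OF assms] by (rule abs_summable_summable)
  then have "theta_term z \<tau> summable_on insert 0 (- {0})"
    by (simp add: summable_on_insert_iff)
  moreover have "insert 0 (- {0}) = (UNIV :: int set)"
    by auto
  ultimately show ?thesis
    by simp
qed

lemma theta_tail_bounds:
  assumes "Im \<tau> \<ge> sqrt 3 / 4" "0 \<le> Im z" "Im z \<le> Im \<tau> / 4"
  shows "(\<Sum>\<^sub>\<infinity>n\<in>- {0}. norm (theta_term z \<tau> n)) < 1"
    and "(\<Sum>\<^sub>\<infinity>n\<in>- {0}. norm (theta_term z \<tau> n)) \<le> 2 * exp (- pi * Im \<tau> / 2)"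
proof -
  define u where "u = exp (- pi * Im \<tau> / 2)"
  have "0 < sqrt 3 / (4::real)"
    by simp
  then have "Im \<tau> > 0"
    using assms(1) by linarith
  then have "(\<Sum>\<^sub>\<infinity>n\<in>- {0}. norm (theta_term z \<tau> n)) \<le> u^2 / (1 - u^4) + u / (1 - u^5)"
    unfolding u_def using assms(2,3) by (rule norm_theta_term_summable(2))
  moreover have "u^2 / (1 - u^4) + u / (1 - u^5) < 1" "u^2 / (1 - u^4) + u / (1 - u^5) \<le> 2 * u"
    using exp_neg_pi_Im_half_le[OF assms(1)] by (intro theta_majorant_sum_bounds; simp add: u_def)+
  ultimately show "(\<Sum>\<^sub>\<infinity>n\<in>- {0}. norm (theta_term z \<tau> n)) < 1"
    and "(\<Sum>\<^sub>\<infinity>n\<in>- {0}. norm (theta_term z \<tau> n)) \<le> 2 * exp (- pi * Im \<tau> / 2)"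
    by (simp_all add: u_def)
qed

lemma infsum_remove:
  fixes f :: "'a \<Rightarrow> 'b::banach"
  assumes "f summable_on A" "a \<in> A"
  shows "infsum f A = f a + infsum f (A - {a})"
proof -
  have "f summable_on A - {a}"
    using assms(1) by (rule summable_on_subset_banach) auto
  then have "infsum f (insert a (A - {a})) = f a + infsum f (A - {a})"
    by (rule infsum_insert) simp
  then show ?thesis
    using assms(2) by (simp add: insert_absorb)
qed

lemma infsum_even_odd_split:
  fixes f :: "int \<Rightarrow> complex"
  assumes "f summable_on UNIV"
  shows "(\<Sum>\<^sub>\<infinity>n. f n) = (\<Sum>\<^sub>\<infinity>n\<in>{n. even n}. f n) + (\<Sum>\<^sub>\<infinity>n\<in>{n. odd n}. f n)"
    and "(\<Sum>\<^sub>\<infinity>n. (if even n then 1 else -1) * f n)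
           = (\<Sum>\<^sub>\<infinity>n\<in>{n. even n}. f n) - (\<Sum>\<^sub>\<infinity>n\<in>{n. odd n}. f n)"
proof -
  have even: "(f has_sum (\<Sum>\<^sub>\<infinity>n\<in>{n. even n}. f n)) {n. even n}"
    and odd: "(f has_sum (\<Sum>\<^sub>\<infinity>n\<in>{n. odd n}. f n)) {n. odd n}"
    by (auto intro!: has_sum_infsum summable_on_subset_banach[OF assms])
  have UNIV: "UNIV = {n::int. even n} \<union> {n. odd n}"
    by auto
  show "(\<Sum>\<^sub>\<infinity>n. f n) = (\<Sum>\<^sub>\<infinity>n\<in>{n. even n}. f n) + (\<Sum>\<^sub>\<infinity>n\<in>{n. odd n}. f n)"
  proof -
    have "(f has_sum ((\<Sum>\<^sub>\<infinity>n\<in>{n. even n}. f n) + (\<Sum>\<^sub>\<infinity>n\<in>{n. odd n}. f n))) UNIV"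
      unfolding UNIV by (rule has_sum_Un_disjoint[OF even odd]) auto
    then show ?thesis
      by (rule infsumI)
  qed
  define g where "g = (\<lambda>n. (if even n then 1 else -1) * f n)"
  have "(g has_sum (\<Sum>\<^sub>\<infinity>n\<in>{n. even n}. f n)) {n. even n}"
    using even by (subst has_sum_cong[where g = f]) (auto simp: g_def)
  moreover have "(g has_sum - (\<Sum>\<^sub>\<infinity>n\<in>{n. odd n}. f n)) {n. odd n}"
    using has_sum_uminusI[OF odd] by (subst has_sum_cong[where g = "\<lambda>n. - f n"]) (auto simp: g_def)
  ultimately have "(g has_sum ((\<Sum>\<^sub>\<infinity>n\<in>{n. even n}. f n) - (\<Sum>\<^sub>\<infinity>n\<in>{n. odd n}. f n))) UNIV"
    unfolding UNIV diff_conv_add_uminus by (rule has_sum_Un_disjoint) auto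
  then have "infsum g UNIV = (\<Sum>\<^sub>\<infinity>n\<in>{n. even n}. f n) - (\<Sum>\<^sub>\<infinity>n\<in>{n. odd n}. f n)"
    by (rule infsumI)
  then show "(\<Sum>\<^sub>\<infinity>n. (if even n then 1 else -1) * f n)
      = (\<Sum>\<^sub>\<infinity>n\<in>{n. even n}. f n) - (\<Sum>\<^sub>\<infinity>n\<in>{n. odd n}. f n)"
    by (simp only: g_def)
qed

lemma jtheta_even_odd:
  assumes "Im \<tau> > 0" "0 \<le> Im z" "Im z \<le> Im \<tau> / 4"
  shows "jtheta z \<tau> = (\<Sum>\<^sub>\<infinity>n\<in>{n. even n}. theta_term z \<tau> n) + (\<Sum>\<^sub>\<infinity>n\<in>{n. odd n}. theta_term z \<tau> n)"
    and "jtheta (z + 1/2) \<tau>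
           = (\<Sum>\<^sub>\<infinity>n\<in>{n. even n}. theta_term z \<tau> n) - (\<Sum>\<^sub>\<infinity>n\<in>{n. odd n}. theta_term z \<tau> n)"
  using infsum_even_odd_split[OF theta_term_summable[OF assms]]
  by (simp_all add: jtheta_eq_infsum theta_term_shift_half)

text \<open>The sum and the difference are twice the even and twice the odd part of the series,
  so it suffices that the constant term \<open>1\<close> dominates the remaining terms, whose moduli add up
  to less than \<open>1\<close>.\<close>
lemma norm_jtheta_diff_shift_half_less:
  assumes "Im \<tau> \<ge> sqrt 3 / 4" "0 \<le> Im z" "Im z \<le> Im \<tau> / 4"
  shows "norm (jtheta z \<tau> - jtheta (z + 1/2) \<tau>) < norm (jtheta z \<tau> + jtheta (z + 1/2) \<tau>)"
proof -
  have pos: "Im \<tau> > 0"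
    using assms(1) real_sqrt_gt_zero[of 3] by linarith
  define T where "T = theta_term z \<tau>"
  define Ev where "Ev = {n::int. even n} - {0}"
  define Od where "Od = {n::int. odd n}"
  have T: "T summable_on UNIV"
    unfolding T_def using pos assms(2,3) by (rule theta_term_summable)
  have N: "(\<lambda>n. norm (T n)) summable_on - {0}"
    unfolding T_def using pos assms(2,3) by (rule norm_theta_term_summable)
  have NE: "(\<lambda>n. norm (T n)) summable_on Ev" and NO: "(\<lambda>n. norm (T n)) summable_on Od"
    by (rule summable_on_subset_banach[OF N]; force simp: Ev_def Od_def)+
  have "(\<Sum>\<^sub>\<infinity>n\<in>Ev. norm (T n)) + (\<Sum>\<^sub>\<infinity>n\<in>Od. norm (T n)) = (\<Sum>\<^sub>\<infinity>n\<in>Ev \<union> Od. norm (T n))"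
    by (rule infsum_Un_disjoint[OF NE NO, symmetric]) (auto simp: Ev_def Od_def)
  also have "Ev \<union> Od = - {0}"
    by (auto simp: Ev_def Od_def)
  also have "(\<Sum>\<^sub>\<infinity>n\<in>- {0}. norm (T n)) < 1"
    unfolding T_def using assms by (rule theta_tail_bounds)
  finally have tail: "(\<Sum>\<^sub>\<infinity>n\<in>Ev. norm (T n)) + (\<Sum>\<^sub>\<infinity>n\<in>Od. norm (T n)) < 1" .
  have "norm (infsum T Ev) \<le> (\<Sum>\<^sub>\<infinity>n\<in>Ev. norm (T n))"
    using has_sum_infsum[OF summable_on_subset_banach[OF T]] has_sum_infsum[OF NE]
    by (rule norm_infsum_le) auto
  moreover have "norm (infsum T Od) \<le> (\<Sum>\<^sub>\<infinity>n\<in>Od. norm (T n))"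
    using has_sum_infsum[OF summable_on_subset_banach[OF T]] has_sum_infsum[OF NO]
    by (rule norm_infsum_le) auto
  moreover have "infsum T {n. even n} = 1 + infsum T Ev"
    unfolding Ev_def using infsum_remove[OF summable_on_subset_banach[OF T], of "{n. even n}" 0]
    by (simp add: T_def)
  moreover have "norm (1 + infsum T Ev) \<ge> 1 - norm (infsum T Ev)"
    using norm_triangle_ineq2[of 1 "- infsum T Ev"] by simp
  moreover have "jtheta z \<tau> - jtheta (z + 1/2) \<tau> = 2 * infsum T Od"
    "jtheta z \<tau> + jtheta (z + 1/2) \<tau> = 2 * infsum T {n. even n}"
    using jtheta_even_odd[OF pos assms(2,3)] unfolding T_def Od_def by simp_all
  ultimately show ?thesis
    using tail by (simp only: norm_mult) simp
qed

lemma norm_jtheta_minus_1_le: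
  assumes "Im \<tau> \<ge> sqrt 3 / 4" "0 \<le> Im z" "Im z \<le> Im \<tau> / 4"
  shows "norm (jtheta z \<tau> - 1) \<le> 2 * exp (- pi * Im \<tau> / 2)"
proof -
  have pos: "Im \<tau> > 0"
    using assms(1) real_sqrt_gt_zero[of 3] by linarith
  have "jtheta z \<tau> - 1 = (\<Sum>\<^sub>\<infinity>n\<in>- {0}. theta_term z \<tau> n)"
    using infsum_remove[OF theta_term_summable[OF pos assms(2,3)], of 0]
    by (simp add: jtheta_eq_infsum Compl_eq_Diff_UNIV)
  also have "norm \<dots> \<le> (\<Sum>\<^sub>\<infinity>n\<in>- {0}. norm (theta_term z \<tau> n))"
    using has_sum_infsum[OF summable_on_subset_banach[OF theta_term_summable[OF pos assms(2,3)]]]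
      has_sum_infsum[OF norm_theta_term_summable(1)[OF pos assms(2,3)]]
    by (rule norm_infsum_le) auto
  also have "\<dots> \<le> 2 * exp (- pi * Im \<tau> / 2)"
    using assms by (rule theta_tail_bounds)
  finally show ?thesis .
qed

section \<open>The duplication formula\<close>

lemma infsum_mult_infsum:
  fixes f :: "'a::countable \<Rightarrow> complex" and g :: "'b::countable \<Rightarrow> complex"
  assumes "f summable_on UNIV" "g summable_on UNIV"
  shows "(\<lambda>(x, y). f x * g y) summable_on UNIV"
    and "(\<Sum>\<^sub>\<infinity>x. f x) * (\<Sum>\<^sub>\<infinity>y. g y) = (\<Sum>\<^sub>\<infinity>(x, y). f x * g y)"
proof -
  have f: "Infinite_Set_Sum.abs_summable_on f UNIV" and g: "Infinite_Set_Sum.abs_summable_on g UNIV"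
    using assms by (simp_all add: summable_on_iff_abs_summable_on_complex abs_summable_equivalent)
  have fg: "Infinite_Set_Sum.abs_summable_on (\<lambda>(x, y). f x * g y) UNIV"
    using abs_summable_on_product[OF _ _ f g] by simp
  then show "(\<lambda>(x, y). f x * g y) summable_on UNIV"
    by (simp add: summable_on_iff_abs_summable_on_complex abs_summable_equivalent)
  show "(\<Sum>\<^sub>\<infinity>x. f x) * (\<Sum>\<^sub>\<infinity>y. g y) = (\<Sum>\<^sub>\<infinity>(x, y). f x * g y)"
    using infsetsum_product[OF _ _ f g] infsetsum_infsum[OF f] infsetsum_infsum[OF g]
      infsetsum_infsum[OF fg] by simp
qed

text \<open>Pairs \<open>(m, n)\<close> with \<open>m + n\<close> even correspond bijectively to pairs \<open>(j, k)\<close>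
  via \<open>m = j + k\<close>, \<open>n = j - k\<close>; the odd pairs cancel between the two products.\<close>
lemma jtheta_duplication:
  assumes "Im \<tau> > 0" "0 \<le> Im z" "Im z \<le> Im \<tau> / 4" "Im w = 0"
  shows "jtheta z \<tau> * jtheta w \<tau> + jtheta (z + 1/2) \<tau> * jtheta (w + 1/2) \<tau>
         = 2 * (jtheta (z + w) (2 * \<tau>) * jtheta (z - w) (2 * \<tau>))"
proof -
  define E where "E = {p :: int \<times> int. even (fst p + snd p)}"
  have s1: "theta_term z \<tau> summable_on UNIV" "theta_term w \<tau> summable_on UNIV"
    "theta_term (z + 1/2) \<tau> summable_on UNIV" "theta_term (w + 1/2) \<tau> summable_on UNIV"
    "theta_term (z + w) (2 * \<tau>) summable_on UNIV" "theta_term (z - w) (2 * \<tau>) summable_on UNIV"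
    using assms by (auto intro!: theta_term_summable)
  have "jtheta z \<tau> * jtheta w \<tau> + jtheta (z + 1/2) \<tau> * jtheta (w + 1/2) \<tau>
      = (\<Sum>\<^sub>\<infinity>(m, n). theta_term z \<tau> m * theta_term w \<tau> n + theta_term (z + 1/2) \<tau> m * theta_term (w + 1/2) \<tau> n)"
    unfolding jtheta_eq_infsum infsum_mult_infsum(2)[OF s1(1,2)] infsum_mult_infsum(2)[OF s1(3,4)]
    using infsum_add[OF infsum_mult_infsum(1)[OF s1(1,2)] infsum_mult_infsum(1)[OF s1(3,4)]]
    by (simp add: case_prod_unfold)
  also have "\<dots> = (\<Sum>\<^sub>\<infinity>(m, n)\<in>E. 2 * (theta_term z \<tau> m * theta_term w \<tau> n))"
    by (rule infsum_cong_neutral) (auto simp: E_def theta_term_shift_half)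
  also have "\<dots> = 2 * (\<Sum>\<^sub>\<infinity>(m, n)\<in>E. theta_term z \<tau> m * theta_term w \<tau> n)"
    by (subst infsum_cmult_right'[symmetric]) (simp add: case_prod_unfold)
  also have "(\<Sum>\<^sub>\<infinity>(m, n)\<in>E. theta_term z \<tau> m * theta_term w \<tau> n)
      = (\<Sum>\<^sub>\<infinity>(j, k). theta_term (z + w) (2 * \<tau>) j * theta_term (z - w) (2 * \<tau>) k)"
    by (rule infsum_reindex_bij_witness[where i = "\<lambda>(m, n). ((m + n) div 2, (m - n) div 2)"
        and j = "\<lambda>(j, k). (j + k, j - k)", symmetric])
       (auto simp: E_def theta_term_duplication, presburger)
  also have "\<dots> = jtheta (z + w) (2 * \<tau>) * jtheta (z - w) (2 * \<tau>)"
    unfolding jtheta_eq_infsum infsum_mult_infsum(2)[OF s1(5,6)] ..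
  finally show ?thesis .
qed

lemma theta00_duplication:
  assumes "Im \<tau> > 0" "0 \<le> Im z" "Im z \<le> Im \<tau> / 4"
  shows "theta00 z \<tau> * theta00 0 \<tau> + theta01 z \<tau> * theta01 0 \<tau> = 2 * theta00 z (2 * \<tau>)^2"
  using jtheta_duplication[OF assms, of 0] by (simp add: theta00_def theta01_def power2_eq_square)

lemma theta01_duplication:
  assumes "Im \<tau> > 0" "0 \<le> Im z" "Im z \<le> Im \<tau> / 4"
  shows "theta00 z \<tau> * theta01 0 \<tau> + theta01 z \<tau> * theta00 0 \<tau> = 2 * theta01 z (2 * \<tau>)^2"
proof -
  have "jtheta (1/2 + 1/2) \<tau> = jtheta 0 \<tau>"
    using jtheta_shift_one[of 0 \<tau>] by simp
  moreover have "jtheta (z - 1/2) (2 * \<tau>) = jtheta (z + 1/2) (2 * \<tau>)"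
    using jtheta_shift_one[of "z - 1/2" "2 * \<tau>"] by (simp add: algebra_simps)
  ultimately show ?thesis
    using jtheta_duplication[OF assms, of "1/2"] by (simp add: theta00_def theta01_def power2_eq_square)
qed

section \<open>Good square roots\<close>

lemma good_roots_of_scaled_squares:
  fixes l P Q a b :: complex
  assumes good: "good_roots (l * P^2) (l * Q^2) a b"
    and PQ: "norm (P - Q) < norm (P + Q)" and "l \<noteq> 0"
  obtains s where "s^2 = l" "a = s * P" "b = s * Q"
proof -
  define s where "s = csqrt l"
  have s: "s^2 = l" "s \<noteq> 0"
    using \<open>l \<noteq> 0\<close> by (auto simp: s_def)
  have "a^2 = (s * P)^2" "b^2 = (s * Q)^2"
    using good s by (simp_all add: good_roots_def power_mult_distrib)
  then have a: "a = s * P \<or> a = - (s * P)" and b: "b = s * Q \<or> b = - (s * Q)"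
    by (simp_all add: power2_eq_iff)
  have le: "norm (a - b) \<le> norm (a + b)"
    using good unfolding good_roots_def by auto
  have no_mixed: False if "a = e * (s * P)" "b = - e * (s * Q)" "e = 1 \<or> e = -1" for e
  proof -
    have "a - b = e * s * (P + Q)" "a + b = e * s * (P - Q)"
      using that(1,2) by (simp_all add: algebra_simps)
    then have "norm (a - b) = norm s * norm (P + Q)" "norm (a + b) = norm s * norm (P - Q)"
      using that(3) by (auto simp: norm_mult)
    with le PQ s(2) show False
      by simp
  qed
  show ?thesis
  proof (cases "a = s * P")
    case True
    with b no_mixed[of 1] have "b = s * Q"
      by auto
    with s(1) True show ?thesis
      by (rule that)
  next
    case False
    with a have "a = - s * P"
      by simp
    moreover from this b no_mixed[of "-1"] have "b = - s * Q"
      by auto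
    ultimately show ?thesis
      using s(1) by (intro that[of "- s"]) simp_all
  qed
qed

definition good_sqrt :: "complex \<Rightarrow> complex \<Rightarrow> complex" where
  "good_sqrt l P = (if 0 \<le> Re (csqrt l * P) then csqrt l else - csqrt l)"

lemma good_sqrt_squared [simp]: "good_sqrt l P ^ 2 = l"
  by (simp add: good_sqrt_def)

lemma good_sqrt_nonzero: "l \<noteq> 0 \<Longrightarrow> good_sqrt l P \<noteq> 0"
  by (metis good_sqrt_squared zero_power2)

lemma good_roots_good_sqrt:
  assumes "norm (P - Q) < norm (P + Q)" "l \<noteq> 0"
  shows "good_roots (l * P^2) (l * Q^2) (good_sqrt l P * P) (good_sqrt l P * Q)"
proof -
  let ?s = "good_sqrt l P"
  have "norm (?s * P - ?s * Q) < norm (?s * P + ?s * Q)"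
    using assms good_sqrt_nonzero[OF assms(2)]
    by (simp add: norm_mult flip: distrib_left right_diff_distrib)
  moreover have "0 \<le> Re (?s * P)"
    by (auto simp: good_sqrt_def)
  ultimately show ?thesis
    unfolding good_roots_def by (simp add: power_mult_distrib)
qed

lemma norm_power_minus_1_le:
  fixes w :: "'a::real_normed_algebra_1"
  shows "norm (w ^ N - 1) \<le> (1 + norm (w - 1)) ^ N - 1"
proof (induction N)
  case 0
  then show ?case by simp
next
  case (Suc N)
  have "norm w \<le> 1 + norm (w - 1)"
    using norm_triangle_ineq[of 1 "w - 1"] by simp
  have "w ^ Suc N - 1 = w * (w ^ N - 1) + (w - 1)"
    by (simp add: algebra_simps)
  then have "norm (w ^ Suc N - 1) \<le> norm (w * (w ^ N - 1)) + norm (w - 1)"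
    by (metis norm_triangle_ineq)
  also have "\<dots> \<le> norm w * norm (w ^ N - 1) + norm (w - 1)"
    by (simp add: norm_mult_ineq)
  also have "\<dots> \<le> (1 + norm (w - 1)) * ((1 + norm (w - 1)) ^ N - 1) + norm (w - 1)"
    using Suc.IH \<open>norm w \<le> 1 + norm (w - 1)\<close> by (intro add_right_mono mult_mono) auto
  also have "\<dots> = (1 + norm (w - 1)) ^ Suc N - 1"
    by (simp add: algebra_simps)
  finally show ?case .
qed

lemma tendsto_doubly_exponential:
  fixes a :: "nat \<Rightarrow> 'a::real_normed_vector"
  assumes "\<And>n. norm (a n - L) \<le> c * u ^ 2 ^ n" "0 \<le> c" "0 \<le> u" "u < 1"
  shows "a \<longlonglongrightarrow> L"
proof (rule LIM_zero_cancel, rule Lim_null_comparison)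
  show "\<forall>\<^sub>F n in sequentially. norm (a n - L) \<le> c * u ^ n"
  proof (intro always_eventually allI)
    fix n
    have "u ^ 2 ^ n \<le> u ^ n"
      using assms(3,4) by (intro power_decreasing) (auto intro: less_imp_le[OF less_exp])
    then show "norm (a n - L) \<le> c * u ^ n"
      using assms(1)[of n] mult_left_mono[OF _ assms(2)] by (meson order_trans)
  qed
  show "(\<lambda>n. c * u ^ n) \<longlonglongrightarrow> 0"
    using assms(3,4) by (intro tendsto_mult_right_zero LIMSEQ_power_zero) simp
qed

lemma tendsto_power_doubly_exponential:
  fixes a :: "nat \<Rightarrow> 'a::real_normed_algebra_1"
  assumes close: "\<And>n. norm (a n - 1) \<le> c * u ^ 2 ^ n" and "0 \<le> u" "u < 1"
  shows "(\<lambda>n. a n ^ 2 ^ Suc n) \<longlonglongrightarrow> 1"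
proof (rule LIM_zero_cancel, rule Lim_null_comparison)
  define h where "h m = real m * u ^ m" for m :: nat
  show "\<forall>\<^sub>F n in sequentially. norm (a n ^ 2 ^ Suc n - 1) \<le> exp (2 * c * h (2 ^ n)) - 1"
  proof (intro always_eventually allI)
    fix n :: nat
    let ?e = "norm (a n - 1)"
    have "norm (a n ^ 2 ^ Suc n - 1) \<le> (1 + ?e) ^ 2 ^ Suc n - 1"
      by (rule norm_power_minus_1_le)
    also have "\<dots> \<le> exp ?e ^ 2 ^ Suc n - 1"
      by (intro diff_right_mono power_mono) (auto simp: add.commute exp_ge_add_one_self)
    also have "\<dots> = exp (real (2 ^ Suc n) * ?e) - 1"
      by (simp only: exp_of_nat_mult)
    also have "\<dots> \<le> exp (2 * c * h (2 ^ n)) - 1"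
    proof -
      have "real (2 ^ Suc n) * ?e \<le> real (2 ^ Suc n) * (c * u ^ 2 ^ n)"
        using close[of n] by (intro mult_left_mono) auto
      also have "\<dots> = 2 * c * h (2 ^ n)"
        by (simp add: h_def)
      finally show ?thesis
        by simp
    qed
    finally show "norm (a n ^ 2 ^ Suc n - 1) \<le> exp (2 * c * h (2 ^ n)) - 1" .
  qed
  have "h \<longlonglongrightarrow> 0"
    unfolding h_def using assms(2,3) by (intro powser_times_n_limit_0) simp
  then have "(\<lambda>n. h (2 ^ n)) \<longlonglongrightarrow> 0"
    using LIMSEQ_subseq_LIMSEQ[of h 0 "\<lambda>n. 2 ^ n"] by (simp add: strict_mono_def o_def)
  then have "(\<lambda>n. exp (2 * c * h (2 ^ n)) - 1) \<longlonglongrightarrow> exp (2 * c * 0) - 1"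
    by (intro tendsto_intros)
  then show "(\<lambda>n. exp (2 * c * h (2 ^ n)) - 1) \<longlonglongrightarrow> 0"
    by simp
qed

section \<open>Sequences obeying the duplication recurrence\<close>

locale duplication_sequences =
  fixes A B C D :: "nat \<Rightarrow> complex" and u :: real
  assumes AB_good: "\<And>n. norm (A n - B n) < norm (A n + B n)"
    and CD_good: "\<And>n. norm (C n - D n) < norm (C n + D n)"
    and A_Suc: "\<And>n. A (Suc n)^2 = (A n * C n + B n * D n) / 2"
    and B_Suc: "\<And>n. B (Suc n)^2 = (A n * D n + B n * C n) / 2"
    and C_Suc: "\<And>n. C (Suc n)^2 = (C n^2 + D n^2) / 2"
    and D_Suc: "\<And>n. D (Suc n)^2 = C n * D n"
    and A_close: "\<And>n. norm (A n - 1) \<le> 2 * u ^ 2 ^ n"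
    and C_close: "\<And>n. norm (C n - 1) \<le> 2 * u ^ 2 ^ n"
    and u_nonneg: "0 \<le> u" and u_less_1: "u < 1"
begin

lemma A_nonzero: "A n \<noteq> 0" and C_nonzero: "C n \<noteq> 0"
  using AB_good[of n] CD_good[of n] by (auto simp: norm_minus_commute)

primrec scale :: "complex \<Rightarrow> complex \<Rightarrow> nat \<Rightarrow> complex" where
  "scale lam mu 0 = lam"
| "scale lam mu (Suc n) = good_sqrt (scale lam mu n) (A n) * good_sqrt mu (C n)"

lemma scale_nonzero: "lam \<noteq> 0 \<Longrightarrow> mu \<noteq> 0 \<Longrightarrow> scale lam mu n \<noteq> 0"
  by (induction n) (auto simp: good_sqrt_nonzero)

lemma optimal_F_seq_scale:
  assumes "lam \<noteq> 0" "mu \<noteq> 0"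
  shows "optimal_F_seq (lam * A 0^2) (lam * B 0^2) (mu * C 0^2) (mu * D 0^2)
    (\<lambda>n. scale lam mu n * A n^2) (\<lambda>n. scale lam mu n * B n^2) (\<lambda>n. mu * C n^2) (\<lambda>n. mu * D n^2)"
  unfolding optimal_F_seq_def
proof (intro conjI allI)
  fix n
  define a where "a = good_sqrt (scale lam mu n) (A n)"
  define c where "c = good_sqrt mu (C n)"
  have "good_roots (scale lam mu n * A n^2) (scale lam mu n * B n^2) (a * A n) (a * B n)"
    unfolding a_def using AB_good scale_nonzero[OF assms] by (rule good_roots_good_sqrt)
  moreover have "good_roots (mu * C n^2) (mu * D n^2) (c * C n) (c * D n)"
    unfolding c_def using CD_good assms(2) by (rule good_roots_good_sqrt)
  moreover have "scale lam mu (Suc n) * A (Suc n)^2 = (a * A n * (c * C n) + a * B n * (c * D n)) / 2"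
    "scale lam mu (Suc n) * B (Suc n)^2 = (a * A n * (c * D n) + a * B n * (c * C n)) / 2"
    "mu * C (Suc n)^2 = (mu * C n^2 + mu * D n^2) / 2"
    by (simp_all add: a_def c_def A_Suc B_Suc C_Suc algebra_simps)
  moreover have "mu * D (Suc n)^2 = c * C n * (c * D n)"
  proof -
    have "mu * D (Suc n)^2 = c^2 * (C n * D n)"
      by (simp add: c_def D_Suc)
    also have "\<dots> = c * C n * (c * D n)"
      by (simp add: power2_eq_square mult_ac)
    finally show ?thesis .
  qed
  ultimately show "\<exists>a b c d. good_roots (scale lam mu n * A n^2) (scale lam mu n * B n^2) a b \<and>
      good_roots (mu * C n^2) (mu * D n^2) c d \<and>
      scale lam mu (Suc n) * A (Suc n)^2 = (a * c + b * d) / 2 \<and>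
      scale lam mu (Suc n) * B (Suc n)^2 = (a * d + b * c) / 2 \<and>
      mu * C (Suc n)^2 = (mu * C n^2 + mu * D n^2) / 2 \<and>
      mu * D (Suc n)^2 = c * d"
    by blast
qed simp_all

text \<open>The invariant \<open>l ^ 2 ^ n * mu = lam * mu ^ 2 ^ n\<close> is the closed form of
  \<open>l (n+1)^2 = l n * mu\<close>.\<close>
lemma optimal_F_seq_imp_scaled:
  assumes "lam \<noteq> 0" "mu \<noteq> 0"
    and opt: "optimal_F_seq (lam * A 0^2) (lam * B 0^2) (mu * C 0^2) (mu * D 0^2) x y z t"
  shows "\<exists>l. l \<noteq> 0 \<and> l ^ 2 ^ n * mu = lam * mu ^ 2 ^ n \<and>
    x n = l * A n^2 \<and> y n = l * B n^2 \<and> z n = mu * C n^2 \<and> t n = mu * D n^2"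
proof (induction n)
  case 0
  then show ?case
    using opt assms(1) by (auto simp: optimal_F_seq_def)
next
  case (Suc n)
  then obtain l where l: "l \<noteq> 0" "l ^ 2 ^ n * mu = lam * mu ^ 2 ^ n" "x n = l * A n^2"
    "y n = l * B n^2" "z n = mu * C n^2" "t n = mu * D n^2"
    by blast
  from opt obtain a b c d where step: "good_roots (x n) (y n) a b" "good_roots (z n) (t n) c d"
    "x (Suc n) = (a * c + b * d) / 2" "y (Suc n) = (a * d + b * c) / 2"
    "z (Suc n) = (z n + t n) / 2" "t (Suc n) = c * d"
    unfolding optimal_F_seq_def by blast
  obtain s where s: "s^2 = l" "a = s * A n" "b = s * B n"
    using good_roots_of_scaled_squares[OF _ AB_good l(1)] step(1) l(3,4) by metis
  obtain r where r: "r^2 = mu" "c = r * C n" "d = r * D n"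
    using good_roots_of_scaled_squares[OF _ CD_good assms(2)] step(2) l(5,6) by metis
  have "(s * r) ^ 2 ^ Suc n = (s^2 * r^2) ^ 2 ^ n"
    by (simp add: power_mult power_mult_distrib)
  then have "(s * r) ^ 2 ^ Suc n * mu = (l * mu) ^ 2 ^ n * mu"
    by (simp add: s(1) r(1))
  also have "\<dots> = lam * mu ^ 2 ^ Suc n"
    using l(2) by (simp add: power_mult_distrib power_mult power2_eq_square algebra_simps)
  finally have "(s * r) ^ 2 ^ Suc n * mu = lam * mu ^ 2 ^ Suc n" .
  moreover have "s * r \<noteq> 0"
    using s(1) r(1) l(1) assms(2) by auto
  moreover have "x (Suc n) = s * r * A (Suc n)^2" "y (Suc n) = s * r * B (Suc n)^2"
    "z (Suc n) = mu * C (Suc n)^2"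
    using step(3-5) l(5,6) s(2,3) r(2,3) by (simp_all add: A_Suc B_Suc C_Suc algebra_simps)
  moreover have "t (Suc n) = mu * D (Suc n)^2"
  proof -
    have "t (Suc n) = r^2 * (C n * D n)"
      using step(6) r(2,3) by (simp add: power2_eq_square mult_ac)
    then show ?thesis
      by (simp add: r(1) D_Suc)
  qed
  ultimately show ?case
    by blast
qed

lemma F_inf_eq_scaled:
  assumes "lam \<noteq> 0" "mu \<noteq> 0"
  shows "F_inf_eq (lam * A 0^2) (lam * B 0^2) (mu * C 0^2) (mu * D 0^2) (lam, mu)"
  unfolding F_inf_eq_def
proof (intro conjI allI impI exI)
  show "optimal_F_seq (lam * A 0^2) (lam * B 0^2) (mu * C 0^2) (mu * D 0^2)
    (\<lambda>n. scale lam mu n * A n^2) (\<lambda>n. scale lam mu n * B n^2) (\<lambda>n. mu * C n^2) (\<lambda>n. mu * D n^2)"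
    using assms by (rule optimal_F_seq_scale)
next
  fix x y z t
  assume opt: "optimal_F_seq (lam * A 0^2) (lam * B 0^2) (mu * C 0^2) (mu * D 0^2) x y z t"
  note scaled = optimal_F_seq_imp_scaled[OF assms opt]
  have "z = (\<lambda>n. mu * C n^2)"
    using scaled by (intro ext) blast
  moreover have "C \<longlonglongrightarrow> 1"
    using C_close by (rule tendsto_doubly_exponential) (use u_nonneg u_less_1 in auto)
  ultimately show "z \<longlonglongrightarrow> mu"
    using tendsto_mult_left[OF tendsto_power[of C 1 sequentially 2], of mu] by simp
  have "(x n / mu) ^ 2 ^ n = lam / mu * A n ^ 2 ^ Suc n" for n
  proof -
    obtain l where l: "l ^ 2 ^ n * mu = lam * mu ^ 2 ^ n" "x n = l * A n^2"
      using scaled[of n] by blast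
    then show ?thesis
      using assms(2) by (simp add: power_divide power_mult_distrib field_simps flip: power_mult)
  qed
  moreover have "(\<lambda>n. A n ^ 2 ^ Suc n) \<longlonglongrightarrow> 1"
    using A_close u_nonneg u_less_1 by (rule tendsto_power_doubly_exponential)
  ultimately show "(\<lambda>n. (x n / mu) ^ 2 ^ n) \<longlonglongrightarrow> lam / mu"
    using tendsto_mult_left[of _ 1 sequentially "lam / mu"] by simp
  show "(lam, mu) = (mu * (lam / mu), mu)"
    using assms(2) by simp
qed (use assms in simp)

end

lemma duplication_sequences_theta:
  assumes "Im \<tau> \<ge> sqrt 3 / 4" "0 \<le> Im z" "Im z \<le> Im \<tau> / 4"
  shows "duplication_sequences
    (\<lambda>n. theta00 z (2 ^ n * \<tau>)) (\<lambda>n. theta01 z (2 ^ n * \<tau>))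
    (\<lambda>n. theta00 0 (2 ^ n * \<tau>)) (\<lambda>n. theta01 0 (2 ^ n * \<tau>)) (exp (- pi * Im \<tau> / 2))"
proof
  have "0 < sqrt 3 / (4::real)"
    by simp
  then have pos: "Im \<tau> > 0"
    using assms(1) by linarith
  then show "0 \<le> exp (- pi * Im \<tau> / 2)" "exp (- pi * Im \<tau> / 2) < 1"
    by simp_all
  fix n :: nat
  let ?\<tau> = "2 ^ n * \<tau>"
  have Im: "Im ?\<tau> = 2 ^ n * Im \<tau>"
    by (induction n) (auto simp: mult.assoc)
  from pos have "Im \<tau> \<le> Im ?\<tau>"
    unfolding Im using mult_right_mono[of 1 "2 ^ n" "Im \<tau>"] by simp
  then have region: "Im ?\<tau> \<ge> sqrt 3 / 4" "Im ?\<tau> > 0" "Im z \<le> Im ?\<tau> / 4"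
    using assms pos by linarith+
  then have region0: "Im 0 \<le> Im ?\<tau> / 4"
    by simp
  have double: "2 ^ Suc n * \<tau> = 2 * ?\<tau>"
    by simp
  have u: "exp (- pi * Im ?\<tau> / 2) = exp (- pi * Im \<tau> / 2) ^ 2 ^ n"
    unfolding Im exp_of_nat_mult[symmetric] by (simp add: mult_ac)
  show "norm (theta00 z ?\<tau> - theta01 z ?\<tau>) < norm (theta00 z ?\<tau> + theta01 z ?\<tau>)"
    "norm (theta00 0 ?\<tau> - theta01 0 ?\<tau>) < norm (theta00 0 ?\<tau> + theta01 0 ?\<tau>)"
    using norm_jtheta_diff_shift_half_less[OF region(1) assms(2) region(3)]
      norm_jtheta_diff_shift_half_less[OF region(1) _ region0]
    by (simp_all add: theta00_def theta01_def)
  show "theta00 z (2 ^ Suc n * \<tau>)^2 = (theta00 z ?\<tau> * theta00 0 ?\<tau> + theta01 z ?\<tau> * theta01 0 ?\<tau>) / 2"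
    "theta01 z (2 ^ Suc n * \<tau>)^2 = (theta00 z ?\<tau> * theta01 0 ?\<tau> + theta01 z ?\<tau> * theta00 0 ?\<tau>) / 2"
    "theta00 0 (2 ^ Suc n * \<tau>)^2 = (theta00 0 ?\<tau>^2 + theta01 0 ?\<tau>^2) / 2"
    "theta01 0 (2 ^ Suc n * \<tau>)^2 = theta00 0 ?\<tau> * theta01 0 ?\<tau>"
    using theta00_duplication[OF region(2) assms(2) region(3)] theta01_duplication[OF region(2) assms(2) region(3)]
      theta00_duplication[OF region(2) _ region0] theta01_duplication[OF region(2) _ region0]
    unfolding double by (simp_all add: power2_eq_square mult_ac)
  show "norm (theta00 z ?\<tau> - 1) \<le> 2 * exp (- pi * Im \<tau> / 2) ^ 2 ^ n"
    "norm (theta00 0 ?\<tau> - 1) \<le> 2 * exp (- pi * Im \<tau> / 2) ^ 2 ^ n"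
    using norm_jtheta_minus_1_le[OF region(1) assms(2) region(3), unfolded u]
      norm_jtheta_minus_1_le[OF region(1) _ region0, unfolded u]
    by (simp_all add: theta00_def)
qed

theorem mainTheorem10:
  fixes \<tau> z lam mu :: complex
  assumes "Im \<tau> > 0" and "Im \<tau> \<ge> sqrt 3 / 4"
    and "0 \<le> Im z" and "Im z \<le> Im \<tau> / 4"
    and "lam \<noteq> 0" and "mu \<noteq> 0"
  shows "F_inf_eq (lam * (theta00 z \<tau>)^2) (lam * (theta01 z \<tau>)^2)
                  (mu * (theta00 0 \<tau>)^2) (mu * (theta01 0 \<tau>)^2) (lam, mu)
       \<and> F_inf_eq 1 ((theta01 z \<tau>)^2 / (theta00 z \<tau>)^2) 1 ((theta01 0 \<tau>)^2 / (theta00 0 \<tau>)^2)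
                  (1 / (theta00 z \<tau>)^2, 1 / (theta00 0 \<tau>)^2)"
proof -
  interpret duplication_sequences
    "\<lambda>n. theta00 z (2 ^ n * \<tau>)" "\<lambda>n. theta01 z (2 ^ n * \<tau>)"
    "\<lambda>n. theta00 0 (2 ^ n * \<tau>)" "\<lambda>n. theta01 0 (2 ^ n * \<tau>)" "exp (- pi * Im \<tau> / 2)"
    using assms(2-4) by (rule duplication_sequences_theta)
  have F: "F_inf_eq (l * theta00 z \<tau>^2) (l * theta01 z \<tau>^2) (m * theta00 0 \<tau>^2) (m * theta01 0 \<tau>^2) (l, m)"
    if "l \<noteq> 0" "m \<noteq> 0" for l m
    using F_inf_eq_scaled[OF that] by simp
  have "theta00 z \<tau> \<noteq> 0" "theta00 0 \<tau> \<noteq> 0"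
    using A_nonzero[of 0] C_nonzero[of 0] by simp_all
  then show ?thesis
    using F[OF assms(5,6)] F[of "1 / theta00 z \<tau>^2" "1 / theta00 0 \<tau>^2"] by simp
qed

end
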